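(* Let $V$ be a real vector space of dimension $d$, and $G$ a group of affine-linear transformations of $V$ including all translations. Then for all $i,j\in\{0,\ldots,d\}$, $\lambda\in[0,\infty)$ and $x\in\mathcal{CB}(V,G)$, \[e_i(\rho_j(\lambda,x))=\rho_i(\lambda,e_j(x))=\begin{cases}\rho_i(\lambda,x)&\text{if }i=j,\\0&\text{if }i\neq j.\end{cases}\] In particular, $\rho_i$ takes values in $\mathcal{CB}_i(V,G)$.
   Context: $\mathcal{K}(V)$ is the set of nonempty compact convex subsets of $V$ with the Hausdorff metric topology. $\mathcal{CB}(V,G)$ is the quotient (with quotient topology) of the free Hausdorff topological abelian group $\mathbb{Z}\mathcal{K}(V)$ on $\mathcal{K}(V)$ (the Hausdorff topological abelian group with continuous map $X\mapsto[X]$ through which every continuous map from $\mathcal{K}(V)$ to a Hausdorff topological abelian group factors uniquely via a continuous homomorphism) by the closure of the subgroup generated by all $[B\cup C]-[B]-[C]+[B\cap C]$ ($B,C,B\cup C\in\mathcal{K}(V)$) and all $[X]-[gX]$ ($g\in G$); images are still written $[X]$. The dilation map $D$ is the unique continuous map $[0,\infty)\times\mathcal{CB}(V,G)\to\mathcal{CB}(V,G)$, homomorphism in its second variable, with $D(\lambda,[X])=[\lambda X]$. The dilation components are the uniquely determined continuous maps $\rho_0\colon\mathcal{CB}(V,G)\to\mathcal{CB}(V,G)$ and $\rho_1,\ldots,\rho_d\colon[0,\infty)\times\mathcal{CB}(V,G)\to\mathcal{CB}(V,G)$ with each $\rho_i(-,x)$ ($i\geqslant1$) a semigroup homomorphism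 on $([0,\infty),+)$ and $D(\lambda,x)=\rho_0(x)+\sum_{i=1}^d\rho_i(\lambda^i,x)$; by convention $\rho_0(\lambda,x)$ means $\rho_0(x)$. The idempotents are $e_0=\rho_0$, $e_i(x)=\rho_i(1,x)$ ($i\geqslant1$), and $\mathcal{CB}_i(V,G)=e_i(\mathcal{CB}(V,G))$. *)

theory Defs
  imports "HOL-Analysis.Analysis" "HOL-Library.Poly_Mapping"
    "HOL-Algebra.Coset" "HOL-Algebra.Generated_Groups" "HOL-Algebra.FiniteProduct"
begin

definition hausdist :: "'v::real_normed_vector set \<Rightarrow> 'v set \<Rightarrow> real" where
  "hausdist X Y = max (SUP x\<in>X. infdist x Y) (SUP y\<in>Y. infdist y X)"

definition Kc :: "'v::euclidean_space set set" where
  "Kc = {X. X \<noteq> {} \<and> compact X \<and> convex X}"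

definition Ktop :: "'v::euclidean_space set topology" where
  "Ktop = Metric_space.mtopology Kc hausdist"

definition ZK :: "('v::euclidean_space set \<Rightarrow>\<^sub>0 int) monoid" where
  "ZK = \<lparr>carrier = {p. Poly_Mapping.keys p \<subseteq> Kc}, mult = (+), one = 0\<rparr>"

definition gen :: "'v set \<Rightarrow> ('v set \<Rightarrow>\<^sub>0 int)" where
  "gen X = Poly_Mapping.single X 1"

definition group_topology :: "'a::ab_group_add set \<Rightarrow> 'a topology \<Rightarrow> bool" where
  "group_topology S T \<longleftrightarrow> topspace T = S
     \<and> continuous_map (prod_topology T T) T (\<lambda>(a, b). a + b)
     \<and> continuous_map T T uminus"

text \<open>The free Hausdorff topology: the supremum of all Hausdorff group topologies on the free
  abelian group for which the generator map is continuous.\<close>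
definition ZKtop :: "('v::euclidean_space set \<Rightarrow>\<^sub>0 int) topology" where
  "ZKtop = topology_generated_by (insert (carrier ZK)
      (\<Union>{{U. openin T U} | T. group_topology (carrier ZK) T \<and> Hausdorff_space T
                                \<and> continuous_map Ktop T gen}))"

definition CBrel :: "('v::euclidean_space \<Rightarrow> 'v) set \<Rightarrow> ('v set \<Rightarrow>\<^sub>0 int) set" where
  "CBrel G = {gen (B \<union> C) - gen B - gen C + gen (B \<inter> C) | B C. B \<in> Kc \<and> C \<in> Kc \<and> B \<union> C \<in> Kc}
           \<union> {gen X - gen (g ` X) | X g. X \<in> Kc \<and> g \<in> G}"

definition CBker :: "('v::euclidean_space \<Rightarrow> 'v) set \<Rightarrow> ('v set \<Rightarrow>\<^sub>0 int) set" where
  "CBker G = ZKtop closure_of (generate ZK (CBrel G))"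

definition CB :: "('v::euclidean_space \<Rightarrow> 'v) set \<Rightarrow> ('v set \<Rightarrow>\<^sub>0 int) set monoid" where
  "CB G = ZK Mod CBker G"

definition cls :: "('v::euclidean_space \<Rightarrow> 'v) set \<Rightarrow> 'v set \<Rightarrow> ('v set \<Rightarrow>\<^sub>0 int) set" where
  "cls G X = CBker G #>\<^bsub>ZK\<^esub> gen X"

definition CBtop :: "('v::euclidean_space \<Rightarrow> 'v) set \<Rightarrow> ('v set \<Rightarrow>\<^sub>0 int) set topology" where
  "CBtop G = topology (\<lambda>U. U \<subseteq> carrier (CB G)
       \<and> openin ZKtop {p \<in> carrier ZK. CBker G #>\<^bsub>ZK\<^esub> p \<in> U})"

definition affine_group :: "('v::real_vector \<Rightarrow> 'v) set \<Rightarrow> bool" where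
  "affine_group G \<longleftrightarrow>
     (\<forall>g\<in>G. \<exists>f b. linear f \<and> bij f \<and> g = (\<lambda>x. f x + b))
     \<and> id \<in> G \<and> (\<forall>g\<in>G. \<forall>h\<in>G. g \<circ> h \<in> G) \<and> (\<forall>g\<in>G. \<exists>h\<in>G. g \<circ> h = id \<and> h \<circ> g = id)
     \<and> (\<forall>b. (\<lambda>x. x + b) \<in> G)"

definition is_dilation :: "('v::euclidean_space \<Rightarrow> 'v) set
    \<Rightarrow> (real \<Rightarrow> ('v set \<Rightarrow>\<^sub>0 int) set \<Rightarrow> ('v set \<Rightarrow>\<^sub>0 int) set) \<Rightarrow> bool" where
  "is_dilation G D \<longleftrightarrow>
     continuous_map (prod_topology (top_of_set {0..}) (CBtop G)) (CBtop G) (\<lambda>(l, x). D l x)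
     \<and> (\<forall>l\<ge>0. D l \<in> hom (CB G) (CB G))
     \<and> (\<forall>l\<ge>0. \<forall>X\<in>Kc. D l (cls G X) = cls G ((\<lambda>v. l *\<^sub>R v) ` X))"

definition dilation_components :: "('v::euclidean_space \<Rightarrow> 'v) set
    \<Rightarrow> (real \<Rightarrow> ('v set \<Rightarrow>\<^sub>0 int) set \<Rightarrow> ('v set \<Rightarrow>\<^sub>0 int) set)
    \<Rightarrow> (('v set \<Rightarrow>\<^sub>0 int) set \<Rightarrow> ('v set \<Rightarrow>\<^sub>0 int) set)
    \<Rightarrow> (nat \<Rightarrow> real \<Rightarrow> ('v set \<Rightarrow>\<^sub>0 int) set \<Rightarrow> ('v set \<Rightarrow>\<^sub>0 int) set) \<Rightarrow> bool" where
  "dilation_components G D rho0 rho \<longleftrightarrow>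
     continuous_map (CBtop G) (CBtop G) rho0
     \<and> (\<forall>i\<in>{1..DIM('v)}.
          continuous_map (prod_topology (top_of_set {0..}) (CBtop G)) (CBtop G) (\<lambda>(l, x). rho i l x)
          \<and> (\<forall>s\<ge>0. \<forall>t\<ge>0. \<forall>x\<in>carrier (CB G). rho i (s + t) x = rho i s x \<otimes>\<^bsub>CB G\<^esub> rho i t x))
     \<and> (\<forall>l\<ge>0. \<forall>x\<in>carrier (CB G).
          D l x = rho0 x \<otimes>\<^bsub>CB G\<^esub> finprod (CB G) (\<lambda>i. rho i (l ^ i) x) {1..DIM('v)})"

text \<open>Convention: rho_0(lambda, x) means rho_0(x).\<close>
definition rhoE :: "('a \<Rightarrow> 'a) \<Rightarrow> (nat \<Rightarrow> real \<Rightarrow> 'a \<Rightarrow> 'a) \<Rightarrow> nat \<Rightarrow> real \<Rightarrow> 'a \<Rightarrow> 'a" where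
  "rhoE rho0 rho i l x = (if i = 0 then rho0 x else rho i l x)"

text \<open>Idempotents: e_0 = rho_0, e_i(x) = rho_i(1, x).\<close>
definition idem :: "('a \<Rightarrow> 'a) \<Rightarrow> (nat \<Rightarrow> real \<Rightarrow> 'a \<Rightarrow> 'a) \<Rightarrow> nat \<Rightarrow> 'a \<Rightarrow> 'a" where
  "idem rho0 rho i x = rhoE rho0 rho i 1 x"

end

theory Submission
  imports Defs "HOL-Algebra.Free_Abelian_Groups"
begin

text \<open>
  The whole statement rests on one uniqueness principle: if \<open>\<chi>\<^sub>1, \<dots>, \<chi>\<^sub>n\<close> are additive maps
  from \<open>[0,\<infinity>)\<close> into an abelian group and \<open>\<Sum>\<^sub>j \<chi>\<^sub>j(\<lambda>\<^sup>j) = 0\<close> for all \<open>\<lambda> \<ge> 0\<close>, then every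
  \<open>\<chi>\<^sub>j\<close> vanishes. Hence a constant plus such a ``polynomial'' in \<open>\<lambda>\<close> determines its coefficients.
  Applied to \<open>D(\<lambda>)(x + y) = D(\<lambda>)x + D(\<lambda>)y\<close>, to \<open>D(\<mu>)D(\<lambda>) = D(\<mu>\<lambda>)\<close> and then to the
  images of \<open>D(\<lambda>)x\<close> under \<open>\<rho>\<^sub>0\<close> and \<open>\<rho>\<^sub>i(t, -)\<close>, it shows successively that all \<open>\<rho>\<^sub>i(t, -)\<close>
  are homomorphisms, that \<open>\<rho>\<^sub>j(t, D(\<lambda>)x) = \<rho>\<^sub>j(\<lambda>\<^sup>j t, x)\<close>, and finally that
  \<open>\<rho>\<^sub>i(t, \<rho>\<^sub>j(s, x)) = \<delta>\<^sub>i\<^sub>j \<rho>\<^sub>i(t s, x)\<close> (with \<open>\<rho>\<^sub>0\<close> idempotent); setting \<open>s = 1\<close> or \<open>t = 1\<close>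
  gives the theorem. The topology enters only in showing that \<open>\<C>\<B>(V,G)\<close> is an abelian group
  (the closure of a subgroup for a group topology is a subgroup) and that the \<open>\<rho>\<^sub>i\<close> take values
  in it.
\<close>

section \<open>Additive maps on the half-line\<close>

definition halfline_hom :: "('a, 'b) monoid_scheme \<Rightarrow> (real \<Rightarrow> 'a) \<Rightarrow> bool" where
  "halfline_hom G f \<longleftrightarrow>
     (\<forall>t\<ge>0. f t \<in> carrier G) \<and> (\<forall>s\<ge>0. \<forall>t\<ge>0. f (s + t) = f s \<otimes>\<^bsub>G\<^esub> f t)"

lemma hom_finprod:
  assumes "comm_group G" "comm_group H" "h \<in> hom G H" "f \<in> A \<rightarrow> carrier G"
  shows "h (finprod G f A) = finprod H (\<lambda>a. h (f a)) A"
proof -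
  interpret G: comm_group G by fact
  interpret H: comm_group H by fact
  interpret group_hom G H h
    by (simp add: group_hom_def group_hom_axioms_def assms(3) G.is_group H.is_group)
  show ?thesis
  proof (cases "finite A")
    case True
    then show ?thesis using assms(4)
    proof (induction A rule: finite_induct)
      case (insert a A)
      then show ?case by (simp add: Pi_def)
    qed simp
  qed simp
qed

context comm_group
begin

lemma finprod_power:
  assumes "f \<in> A \<rightarrow> carrier G"
  shows "(\<Otimes>a\<in>A. f a [^] (n::nat)) = (\<Otimes>a\<in>A. f a) [^] n"
proof (induction n)
  case (Suc n)
  have "(\<Otimes>a\<in>A. f a [^] Suc n) = (\<Otimes>a\<in>A. f a [^] n \<otimes> f a)"
    by simp
  also have "\<dots> = (\<Otimes>a\<in>A. f a [^] n) \<otimes> (\<Otimes>a\<in>A. f a)"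
    using assms by (intro finprod_multf) auto
  finally show ?case using Suc by simp
qed simp

lemma finprod_inv:
  assumes "f \<in> A \<rightarrow> carrier G"
  shows "(\<Otimes>a\<in>A. inv f a) = inv (\<Otimes>a\<in>A. f a)"
proof (cases "finite A")
  case True
  then show ?thesis using assms
    by (induction A rule: finite_induct) (auto simp: inv_mult Pi_def)
qed simp

lemma halfline_hom_closed: "halfline_hom G f \<Longrightarrow> t \<ge> 0 \<Longrightarrow> f t \<in> carrier G"
  by (simp add: halfline_hom_def)

lemma halfline_hom_add: "halfline_hom G f \<Longrightarrow> s \<ge> 0 \<Longrightarrow> t \<ge> 0 \<Longrightarrow> f (s + t) = f s \<otimes> f t"
  by (simp add: halfline_hom_def)

lemma halfline_hom_zero:
  assumes "halfline_hom G f"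
  shows "f 0 = \<one>"
  using halfline_hom_add[OF assms, of 0 0] halfline_hom_closed[OF assms, of 0] by simp

lemma halfline_hom_of_nat_mult:
  assumes "halfline_hom G f" "t \<ge> 0"
  shows "f (of_nat n * t) = f t [^] n"
proof (induction n)
  case 0
  show ?case using halfline_hom_zero[OF assms(1)] by simp
next
  case (Suc n)
  have "f (of_nat (Suc n) * t) = f (of_nat n * t) \<otimes> f t"
    using halfline_hom_add[OF assms(1), of "of_nat n * t" t] assms(2) by (simp add: algebra_simps)
  with Suc show ?case by simp
qed

lemma halfline_hom_one: "halfline_hom G (\<lambda>t. \<one>)"
  by (simp add: halfline_hom_def)

lemma halfline_hom_mult:
  assumes f: "halfline_hom G f" and g: "halfline_hom G g"
  shows "halfline_hom G (\<lambda>t. f t \<otimes> g t)"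
  unfolding halfline_hom_def
proof (intro conjI allI impI)
  fix t :: real
  assume "t \<ge> 0"
  then show "f t \<otimes> g t \<in> carrier G"
    using f g by (simp add: halfline_hom_closed)
next
  fix s t :: real
  assume "s \<ge> 0" "t \<ge> 0"
  then show "f (s + t) \<otimes> g (s + t) = (f s \<otimes> g s) \<otimes> (f t \<otimes> g t)"
    using f g by (simp add: halfline_hom_add halfline_hom_closed m_ac)
qed

lemma halfline_hom_inv:
  assumes f: "halfline_hom G f"
  shows "halfline_hom G (\<lambda>t. inv f t)"
  unfolding halfline_hom_def
proof (intro conjI allI impI)
  fix t :: real
  assume "t \<ge> 0"
  then show "inv f t \<in> carrier G"
    using f by (simp add: halfline_hom_closed)
next
  fix s t :: real
  assume "s \<ge> 0" "t \<ge> 0"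
  then show "inv f (s + t) = inv f s \<otimes> inv f t"
    using f by (simp add: halfline_hom_add halfline_hom_closed inv_mult)
qed

lemma halfline_hom_scale:
  assumes f: "halfline_hom G f" and c: "c \<ge> 0"
  shows "halfline_hom G (\<lambda>t. f (c * t))"
  using f c unfolding halfline_hom_def by (simp add: distrib_left)

lemma halfline_hom_compose:
  assumes h: "h \<in> hom G G" and f: "halfline_hom G f"
  shows "halfline_hom G (\<lambda>t. h (f t))"
  unfolding halfline_hom_def
proof (intro conjI allI impI)
  fix t :: real
  assume "t \<ge> 0"
  then show "h (f t) \<in> carrier G"
    using h f by (simp add: halfline_hom_closed hom_in_carrier)
next
  fix s t :: real
  assume "s \<ge> 0" "t \<ge> 0"
  then show "h (f (s + t)) = h (f s) \<otimes> h (f t)"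
    using h f by (simp add: halfline_hom_add halfline_hom_closed hom_mult)
qed

lemma halfline_hom_one_if_scaled_eq:
  assumes f: "halfline_hom G f" and ab: "0 \<le> a" "a < b"
    and eq: "\<And>t. t \<ge> 0 \<Longrightarrow> f (a * t) = f (b * t)" and t: "t \<ge> 0"
  shows "f t = \<one>"
proof -
  define u where "u = t / (b - a)"
  have u: "u \<ge> 0" "b * u = a * u + t"
    using ab t by (auto simp: u_def field_simps)
  have "f (a * u) = f (a * u) \<otimes> f t"
    using eq[OF u(1)] halfline_hom_add[OF f, of "a * u" t] u ab t by simp
  then show ?thesis
    using halfline_hom_closed[OF f] u ab t by simp
qed

lemma poly_prod_rescale:
  assumes hom: "\<forall>j\<in>{1..Suc n}. halfline_hom G (chi j)"
    and vanish: "\<forall>l\<ge>0. (\<Otimes>j\<in>{1..Suc n}. chi j (l ^ j)) = \<one>" and l: "l \<ge> 0"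
  shows "(\<Otimes>j\<in>{1..n}. chi j (2 ^ j * l ^ j) \<otimes> inv chi j (2 ^ Suc n * l ^ j)) = \<one>"
proof -
  let ?N = "Suc n"
  have closed: "\<And>j t. j \<in> {1..?N} \<Longrightarrow> t \<ge> 0 \<Longrightarrow> chi j t \<in> carrier G"
    using hom halfline_hom_closed by blast
  have doubled: "(\<Otimes>j\<in>{1..?N}. chi j (2 ^ j * l ^ j)) = \<one>"
    using vanish[rule_format, of "2 * l"] l by (simp add: power_mult_distrib del: power_Suc)
  have "(\<Otimes>j\<in>{1..?N}. chi j (2 ^ ?N * l ^ j)) = (\<Otimes>j\<in>{1..?N}. chi j (l ^ j) [^] (2::nat) ^ ?N)"
    using hom l
    by (intro finprod_cong') (auto simp: closed halfline_hom_of_nat_mult[symmetric] simp del: power_Suc)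
  also have "\<dots> = \<one>"
    using finprod_power[of "\<lambda>j. chi j (l ^ j)"] vanish l closed by (simp add: Pi_def del: power_Suc)
  finally have powered: "(\<Otimes>j\<in>{1..?N}. chi j (2 ^ ?N * l ^ j)) = \<one>" .
  define F where "F j = chi j (2 ^ j * l ^ j) \<otimes> inv chi j (2 ^ ?N * l ^ j)" for j
  have "(\<Otimes>j\<in>{1..?N}. F j) = \<one>"
    unfolding F_def using doubled powered finprod_inv[of "\<lambda>j. chi j (2 ^ ?N * l ^ j)" "{1..?N}"] l closed
    by (simp add: Pi_def del: power_Suc)
  moreover have "F ?N = \<one>" "F \<in> {1..n} \<rightarrow> carrier G"
    using closed l by (auto simp: F_def)
  ultimately have "(\<Otimes>j\<in>{1..n}. F j) = \<one>"
    by (simp add: atLeastAtMostSuc_conv)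
  then show ?thesis
    unfolding F_def .
qed

lemma halfline_hom_poly_top_trivial:
  assumes hom: "\<forall>j\<in>{1..Suc n}. halfline_hom G (chi j)"
    and vanish: "\<forall>l\<ge>0. (\<Otimes>j\<in>{1..Suc n}. chi j (l ^ j)) = \<one>"
    and lower: "\<forall>j\<in>{1..n}. \<forall>t\<ge>0. chi j t = \<one>" and t: "t \<ge> 0"
  shows "chi (Suc n) t = \<one>"
proof -
  define l where "l = root (Suc n) t"
  have l: "l \<ge> 0" "l ^ Suc n = t"
    using t by (simp_all add: l_def real_root_pow_pos2 del: power_Suc)
  have "(\<Otimes>j\<in>{1..n}. chi j (l ^ j)) = \<one>"
    using lower l by (intro finprod_one_eqI) simp
  moreover have "(\<lambda>j. chi j (l ^ j)) \<in> {1..n} \<rightarrow> carrier G" "chi (Suc n) t \<in> carrier G"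
    using hom halfline_hom_closed l t by auto
  ultimately have "(\<Otimes>j\<in>{1..Suc n}. chi j (l ^ j)) = chi (Suc n) t"
    using l by (simp add: atLeastAtMostSuc_conv del: power_Suc)
  then show ?thesis
    using vanish l by simp
qed

lemma halfline_hom_poly_trivial:
  assumes "\<forall>j\<in>{1..n}. halfline_hom G (chi j)"
    and "\<forall>l\<ge>0. (\<Otimes>j\<in>{1..n}. chi j (l ^ j)) = \<one>"
  shows "\<forall>j\<in>{1..n}. \<forall>t\<ge>0. chi j t = \<one>"
  using assms
proof (induction n arbitrary: chi)
  case 0
  then show ?case by simp
next
  case (Suc n)
  have hom: "\<And>j. j \<in> {1..Suc n} \<Longrightarrow> halfline_hom G (chi j)"
    using Suc.prems(1) by blast
  \<comment> \<open>Dividing the identity at \<open>2 l\<close> by the \<open>2 ^ Suc n\<close>-th power of the identity at \<open>l\<close>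
    cancels the top term and leaves an identity of the same shape of degree \<open>n\<close>.\<close>
  define chi' where "chi' j t = chi j (2 ^ j * t) \<otimes> inv chi j (2 ^ Suc n * t)" for j t
  have "\<forall>j\<in>{1..n}. halfline_hom G (chi' j)"
    unfolding chi'_def by (auto intro!: halfline_hom_mult halfline_hom_inv halfline_hom_scale hom)
  moreover have "\<forall>l\<ge>0. (\<Otimes>j\<in>{1..n}. chi' j (l ^ j)) = \<one>"
    unfolding chi'_def using poly_prod_rescale[OF Suc.prems] by blast
  ultimately have "\<forall>j\<in>{1..n}. \<forall>t\<ge>0. chi' j t = \<one>"
    by (rule Suc.IH)
  then have scaled: "chi j (2 ^ j * t) = chi j (2 ^ Suc n * t)" if "j \<in> {1..n}" "t \<ge> 0" for j t
    using that hom halfline_hom_closed by (auto simp: chi'_def inv_solve_right' simp del: power_Suc)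
  have lower: "\<forall>j\<in>{1..n}. \<forall>t\<ge>0. chi j t = \<one>"
  proof (intro ballI allI impI)
    fix j t
    assume j: "j \<in> {1..n}" and t: "(t::real) \<ge> 0"
    show "chi j t = \<one>"
    proof (rule halfline_hom_one_if_scaled_eq[OF hom])
      show "j \<in> {1..Suc n}"
        using j by simp
      show "(2::real) ^ j < 2 ^ Suc n"
        using j by (intro power_strict_increasing) auto
    qed (use j t scaled in auto)
  qed
  then show ?case
    using halfline_hom_poly_top_trivial[OF Suc.prems] by (auto simp: le_Suc_eq)
qed

lemma halfline_hom_powers_at_zero:
  "\<forall>j\<in>{1..n}. halfline_hom G (f j) \<Longrightarrow> (\<Otimes>j\<in>{1..n}. f j (0 ^ j)) = \<one>"
  by (intro finprod_one_eqI) (auto simp: halfline_hom_zero power_0_left)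

lemma poly_decomp_unique:
  assumes c: "c \<in> carrier G" "c' \<in> carrier G"
    and hom: "\<forall>j\<in>{1..n}. halfline_hom G (psi j)" "\<forall>j\<in>{1..n}. halfline_hom G (phi j)"
    and eq: "\<forall>l\<ge>0. c \<otimes> (\<Otimes>j\<in>{1..n}. psi j (l ^ j)) = c' \<otimes> (\<Otimes>j\<in>{1..n}. phi j (l ^ j))"
  shows "c = c'" and "\<forall>j\<in>{1..n}. \<forall>t\<ge>0. psi j t = phi j t"
proof -
  show "c = c'"
    using eq[rule_format, of 0] halfline_hom_powers_at_zero[OF hom(1)] halfline_hom_powers_at_zero[OF hom(2)] c by simp
  have closed: "(\<lambda>j. f j (l ^ j)) \<in> {1..n} \<rightarrow> carrier G"
    if "\<forall>j\<in>{1..n}. halfline_hom G (f j)" "l \<ge> 0" for f l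
    using that halfline_hom_closed by auto
  define chi where "chi j t = psi j t \<otimes> inv phi j t" for j t
  have "\<forall>j\<in>{1..n}. halfline_hom G (chi j)"
    using hom unfolding chi_def by (auto intro!: halfline_hom_mult halfline_hom_inv)
  moreover have "\<forall>l\<ge>0. (\<Otimes>j\<in>{1..n}. chi j (l ^ j)) = \<one>"
  proof (intro allI impI)
    fix l :: real
    assume l: "l \<ge> 0"
    have "(\<Otimes>j\<in>{1..n}. psi j (l ^ j)) = (\<Otimes>j\<in>{1..n}. phi j (l ^ j))"
      using eq[rule_format, OF l] \<open>c = c'\<close> c closed[OF hom(1) l] closed[OF hom(2) l] by simp
    then show "(\<Otimes>j\<in>{1..n}. chi j (l ^ j)) = \<one>"
      unfolding chi_def using finprod_inv[OF closed[OF hom(2) l]] closed[OF hom(1) l] closed[OF hom(2) l]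
      by (simp add: Pi_def)
  qed
  ultimately have "\<forall>j\<in>{1..n}. \<forall>t\<ge>0. chi j t = \<one>"
    by (rule halfline_hom_poly_trivial)
  then show "\<forall>j\<in>{1..n}. \<forall>t\<ge>0. psi j t = phi j t"
    using hom halfline_hom_closed by (auto simp: chi_def inv_solve_right')
qed

end

section \<open>Polynomial decompositions of a dilation action\<close>

locale polynomial_dilation = comm_group G for G :: "('a, 'b) monoid_scheme" (structure) +
  fixes d :: nat
    and D :: "real \<Rightarrow> 'a \<Rightarrow> 'a"
    and rho0 :: "'a \<Rightarrow> 'a"
    and rho :: "nat \<Rightarrow> real \<Rightarrow> 'a \<Rightarrow> 'a"
  assumes rho0_closed: "x \<in> carrier G \<Longrightarrow> rho0 x \<in> carrier G"
    and halfline_hom_rho: "i \<in> {1..d} \<Longrightarrow> x \<in> carrier G \<Longrightarrow> halfline_hom G (\<lambda>t. rho i t x)"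
    and D_hom: "l \<ge> 0 \<Longrightarrow> D l \<in> hom G G"
    and D_mult: "l \<ge> 0 \<Longrightarrow> m \<ge> 0 \<Longrightarrow> x \<in> carrier G \<Longrightarrow> D m (D l x) = D (m * l) x"
    and D_decomp: "l \<ge> 0 \<Longrightarrow> x \<in> carrier G \<Longrightarrow> D l x = rho0 x \<otimes> (\<Otimes>i\<in>{1..d}. rho i (l ^ i) x)"
begin

lemma rho_closed: "i \<in> {1..d} \<Longrightarrow> t \<ge> 0 \<Longrightarrow> x \<in> carrier G \<Longrightarrow> rho i t x \<in> carrier G"
  using halfline_hom_closed[OF halfline_hom_rho] .

lemma halfline_hom_rho_scaled:
  "i \<in> {1..d} \<Longrightarrow> c \<ge> 0 \<Longrightarrow> x \<in> carrier G \<Longrightarrow> halfline_hom G (\<lambda>t. rho i (c * t) x)"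
  using halfline_hom_scale[OF halfline_hom_rho] .

lemma rho_powers_closed: "l \<ge> 0 \<Longrightarrow> x \<in> carrier G \<Longrightarrow> (\<lambda>i. rho i (l ^ i) x) \<in> {1..d} \<rightarrow> carrier G"
  by (simp add: rho_closed)

lemma D_closed: "l \<ge> 0 \<Longrightarrow> x \<in> carrier G \<Longrightarrow> D l x \<in> carrier G"
  by (rule hom_in_carrier[OF D_hom])

lemma rho0_eq_D0: "x \<in> carrier G \<Longrightarrow> rho0 x = D 0 x"
  using D_decomp[of 0 x] rho0_closed halfline_hom_powers_at_zero[of d "\<lambda>i t. rho i t x"]
  by (simp add: halfline_hom_rho)

lemma rho0_hom: "rho0 \<in> hom G G"
  by (rule hom_restrict[OF D_hom[of 0]]) (simp_all add: rho0_eq_D0)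

lemma D_decomp_mult:
  assumes l: "l \<ge> 0" and x: "x \<in> carrier G" and y: "y \<in> carrier G"
  shows "rho0 (x \<otimes> y) \<otimes> (\<Otimes>j\<in>{1..d}. rho j (l ^ j) (x \<otimes> y))
           = (rho0 x \<otimes> rho0 y) \<otimes> (\<Otimes>j\<in>{1..d}. rho j (l ^ j) x \<otimes> rho j (l ^ j) y)"
proof -
  have "rho0 (x \<otimes> y) \<otimes> (\<Otimes>j\<in>{1..d}. rho j (l ^ j) (x \<otimes> y)) = D l x \<otimes> D l y"
    using D_decomp[OF l] hom_mult[OF D_hom[OF l] x y] x y by simp
  also have "\<dots> = (rho0 x \<otimes> rho0 y) \<otimes> (\<Otimes>j\<in>{1..d}. rho j (l ^ j) x \<otimes> rho j (l ^ j) y)"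
    using D_decomp[OF l] x y rho0_closed rho_powers_closed[OF l]
    by (simp add: finprod_multf m_ac)
  finally show ?thesis .
qed

lemma rho_hom:
  assumes i: "i \<in> {1..d}" and t: "t \<ge> 0"
  shows "rho i t \<in> hom G G"
proof (rule homI)
  fix x y
  assume x: "x \<in> carrier G" and y: "y \<in> carrier G"
  have "\<forall>j\<in>{1..d}. halfline_hom G (\<lambda>t. rho j t (x \<otimes> y))"
       "\<forall>j\<in>{1..d}. halfline_hom G (\<lambda>t. rho j t x \<otimes> rho j t y)"
    using x y by (simp_all add: halfline_hom_rho halfline_hom_mult)
  note unique = poly_decomp_unique[OF rho0_closed[OF m_closed[OF x y]]
                                      m_closed[OF rho0_closed[OF x] rho0_closed[OF y]] this]
  have "\<forall>j\<in>{1..d}. \<forall>t\<ge>0. rho j t (x \<otimes> y) = rho j t x \<otimes> rho j t y"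
    using unique(2) D_decomp_mult[OF _ x y] by blast
  then show "rho i t (x \<otimes> y) = rho i t x \<otimes> rho i t y"
    using i t by blast
qed (use i t rho_closed in simp)

lemma D_D_decomp:
  assumes l: "l \<ge> 0" and m: "m \<ge> 0" and x: "x \<in> carrier G"
  shows "rho0 (D l x) \<otimes> (\<Otimes>j\<in>{1..d}. rho j (m ^ j) (D l x))
           = rho0 x \<otimes> (\<Otimes>j\<in>{1..d}. rho j (l ^ j * m ^ j) x)"
proof -
  have "rho0 (D l x) \<otimes> (\<Otimes>j\<in>{1..d}. rho j (m ^ j) (D l x)) = D (m * l) x"
    using D_decomp[OF m D_closed[OF l x]] D_mult[OF l m x] by simp
  also have "\<dots> = rho0 x \<otimes> (\<Otimes>j\<in>{1..d}. rho j (l ^ j * m ^ j) x)"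
    using D_decomp[of "m * l" x] l m x by (simp add: power_mult_distrib mult.commute)
  finally show ?thesis .
qed

lemma
  assumes l: "l \<ge> 0" and x: "x \<in> carrier G"
  shows rho0_D: "rho0 (D l x) = rho0 x"
    and rho_D: "\<forall>j\<in>{1..d}. \<forall>t\<ge>0. rho j t (D l x) = rho j (l ^ j * t) x"
proof -
  have "\<forall>j\<in>{1..d}. halfline_hom G (\<lambda>t. rho j t (D l x))"
       "\<forall>j\<in>{1..d}. halfline_hom G (\<lambda>t. rho j (l ^ j * t) x)"
    using l x by (simp_all add: halfline_hom_rho halfline_hom_rho_scaled D_closed)
  note unique = poly_decomp_unique[OF rho0_closed[OF D_closed[OF l x]] rho0_closed[OF x] this]
  show "rho0 (D l x) = rho0 x"
    using unique(1) D_D_decomp[OF l _ x] by blast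
  show "\<forall>j\<in>{1..d}. \<forall>t\<ge>0. rho j t (D l x) = rho j (l ^ j * t) x"
    using unique(2) D_D_decomp[OF l _ x] by blast
qed

lemma rho_rho_decomp:
  assumes i: "i \<in> {1..d}" and t: "t \<ge> 0" and l: "l \<ge> 0" and x: "x \<in> carrier G"
  shows "rho i t (rho0 x) \<otimes> (\<Otimes>k\<in>{1..d}. rho i t (rho k (l ^ k) x))
           = \<one> \<otimes> (\<Otimes>k\<in>{1..d}. if k = i then rho i (t * l ^ k) x else \<one>)"
proof -
  have "rho i t (rho0 x) \<otimes> (\<Otimes>k\<in>{1..d}. rho i t (rho k (l ^ k) x)) = rho i t (D l x)"
    using D_decomp[OF l x] hom_mult[OF rho_hom[OF i t]] rho0_closed[OF x]
      hom_finprod[OF comm_group_axioms comm_group_axioms rho_hom[OF i t] rho_powers_closed[OF l x]]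
      rho_powers_closed[OF l x]
    by simp
  also have "\<dots> = rho i (l ^ i * t) x"
    using rho_D[OF l x] i t by simp
  also have "\<dots> = (\<Otimes>k\<in>{1..d}. if k = i then rho i (t * l ^ k) x else \<one>)"
    using finprod_singleton_swap[of i "{1..d}" "\<lambda>k. rho i (t * l ^ k) x"] i t l x
    by (simp add: rho_closed mult.commute)
  finally show ?thesis
    using i t l x by (simp add: rho_closed Pi_def)
qed

lemma
  assumes i: "i \<in> {1..d}" and t: "t \<ge> 0" and x: "x \<in> carrier G"
  shows rho_rho0: "rho i t (rho0 x) = \<one>"
    and rho_rho: "\<forall>k\<in>{1..d}. \<forall>s\<ge>0. rho i t (rho k s x) = (if k = i then rho i (t * s) x else \<one>)"
proof -
  have lhs: "\<forall>k\<in>{1..d}. halfline_hom G (\<lambda>s. rho i t (rho k s x))"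
    using halfline_hom_compose[OF rho_hom[OF i t] halfline_hom_rho] x by simp
  have rhs: "\<forall>k\<in>{1..d}. halfline_hom G (\<lambda>s. if k = i then rho i (t * s) x else \<one>)"
  proof
    fix k
    show "halfline_hom G (\<lambda>s. if k = i then rho i (t * s) x else \<one>)"
      by (cases "k = i") (simp_all add: halfline_hom_rho_scaled[OF i t x] halfline_hom_one)
  qed
  note unique = poly_decomp_unique[OF hom_in_carrier[OF rho_hom[OF i t] rho0_closed[OF x]]
                                       one_closed lhs rhs]
  show "rho i t (rho0 x) = \<one>"
    using unique(1) rho_rho_decomp[OF i t _ x] by blast
  show "\<forall>k\<in>{1..d}. \<forall>s\<ge>0. rho i t (rho k s x) = (if k = i then rho i (t * s) x else \<one>)"
    using unique(2) rho_rho_decomp[OF i t _ x] by blast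
qed

lemma rho0_rho_decomp:
  assumes l: "l \<ge> 0" and x: "x \<in> carrier G"
  shows "rho0 (rho0 x) \<otimes> (\<Otimes>k\<in>{1..d}. rho0 (rho k (l ^ k) x)) = rho0 x \<otimes> (\<Otimes>k\<in>{1..d}. \<one>)"
proof -
  have "rho0 (rho0 x) \<otimes> (\<Otimes>k\<in>{1..d}. rho0 (rho k (l ^ k) x)) = rho0 (D l x)"
    using D_decomp[OF l x] hom_mult[OF rho0_hom] rho0_closed[OF x]
      hom_finprod[OF comm_group_axioms comm_group_axioms rho0_hom rho_powers_closed[OF l x]]
      rho_powers_closed[OF l x]
    by simp
  then show ?thesis
    using rho0_D[OF l x] rho0_closed[OF x] by simp
qed

lemma
  assumes x: "x \<in> carrier G"
  shows rho0_rho0: "rho0 (rho0 x) = rho0 x"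
    and rho0_rho: "\<forall>k\<in>{1..d}. \<forall>s\<ge>0. rho0 (rho k s x) = \<one>"
proof -
  have "\<forall>k\<in>{1..d}. halfline_hom G (\<lambda>s. rho0 (rho k s x))"
    using halfline_hom_compose[OF rho0_hom halfline_hom_rho] x by simp
  note unique = poly_decomp_unique[where phi = "\<lambda>k s. \<one>",
                  OF rho0_closed[OF rho0_closed[OF x]] rho0_closed[OF x] this]
  show "rho0 (rho0 x) = rho0 x"
    using unique(1) rho0_rho_decomp[OF _ x] halfline_hom_one by blast
  show "\<forall>k\<in>{1..d}. \<forall>s\<ge>0. rho0 (rho k s x) = \<one>"
    using unique(2) rho0_rho_decomp[OF _ x] halfline_hom_one by blast
qed

lemma rhoE_closed: "i \<in> {0..d} \<Longrightarrow> l \<ge> 0 \<Longrightarrow> x \<in> carrier G \<Longrightarrow> rhoE rho0 rho i l x \<in> carrier G"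
  by (simp add: rhoE_def rho0_closed rho_closed)

lemma rhoE_rhoE:
  assumes i: "i \<in> {0..d}" and j: "j \<in> {0..d}" and s: "s \<ge> 0" and t: "t \<ge> 0"
    and x: "x \<in> carrier G"
  shows "rhoE rho0 rho i t (rhoE rho0 rho j s x) = (if i = j then rhoE rho0 rho i (t * s) x else \<one>)"
proof (cases "i = 0"; cases "j = 0")
  assume "i = 0" "j = 0"
  then show ?thesis
    using rho0_rho0[OF x] by (simp add: rhoE_def)
next
  assume "i = 0" "j \<noteq> 0"
  then show ?thesis
    using rho0_rho[OF x] j s by (simp add: rhoE_def)
next
  assume "i \<noteq> 0" "j = 0"
  then show ?thesis
    using rho_rho0[OF _ t x] i by (simp add: rhoE_def)
next
  assume "i \<noteq> 0" "j \<noteq> 0"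
  then show ?thesis
    using rho_rho[OF _ t x] i j s by (auto simp: rhoE_def)
qed

lemma rhoE_in_idem_image:
  assumes i: "i \<in> {0..d}" and l: "l \<ge> 0" and x: "x \<in> carrier G"
  shows "rhoE rho0 rho i l x \<in> idem rho0 rho i ` carrier G"
proof (rule rev_image_eqI)
  show "rhoE rho0 rho i l x \<in> carrier G"
    by (rule rhoE_closed[OF i l x])
  show "rhoE rho0 rho i l x = idem rho0 rho i (rhoE rho0 rho i l x)"
    using rhoE_rhoE[OF i i l _ x, of 1] by (simp add: idem_def)
qed

end

section \<open>Group topologies\<close>

lemma continuous_map_into_topology_generated_by_opens:
  assumes f: "f ` topspace X \<subseteq> S"
    and cont: "\<And>T. P T \<Longrightarrow> continuous_map X T f"
  shows "continuous_map X (topology_generated_by (insert S (\<Union>{{U. openin T U} | T. P T}))) f"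
proof (rule continuous_on_generated_topo)
  fix U
  assume "U \<in> insert S (\<Union>{{U. openin T U} | T. P T})"
  then consider "U = S" | T where "P T" "openin T U"
    by blast
  then show "openin X (f -` U \<inter> topspace X)"
  proof cases
    case 1
    then have "f -` U \<inter> topspace X = topspace X"
      using f by blast
    then show ?thesis
      by simp
  next
    case 2
    have "{x \<in> topspace X. f x \<in> U} = f -` U \<inter> topspace X"
      by blast
    then show ?thesis
      using openin_continuous_map_preimage[OF cont[OF 2(1)] 2(2)] by simp
  qed
qed (use f in blast)

lemma group_topology_generated_by_opens:
  fixes S :: "'a::ab_group_add set"
  assumes add: "\<And>a b. a \<in> S \<Longrightarrow> b \<in> S \<Longrightarrow> a + b \<in> S"
    and neg: "\<And>a. a \<in> S \<Longrightarrow> - a \<in> S"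
    and group_top: "\<And>T. P T \<Longrightarrow> group_topology S T"
  shows "group_topology S (topology_generated_by (insert S (\<Union>{{U. openin T U} | T. P T})))"
    (is "group_topology S ?T")
proof -
  have topspace: "topspace ?T = S"
    using group_top openin_subset by (fastforce simp: group_topology_def)
  have coarser: "continuous_map ?T T id" if "P T" for T
    unfolding continuous_map_def
  proof (intro conjI allI impI)
    show "id \<in> topspace ?T \<rightarrow> topspace T"
      using group_top[OF that] topspace by (simp add: group_topology_def)
  next
    fix U
    assume U: "openin T U"
    then have "{x \<in> topspace ?T. id x \<in> U} = U"
      using openin_subset[OF U] group_top[OF that] topspace by (auto simp: group_topology_def)
    moreover have "openin ?T U"
      using that U by (intro topology_generated_by_Basis) blast
    ultimately show "openin ?T {x \<in> topspace ?T. id x \<in> U}"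
      by simp
  qed
  have "continuous_map (prod_topology ?T ?T) ?T (\<lambda>(a, b). a + b)"
  proof (rule continuous_map_into_topology_generated_by_opens)
    show "(\<lambda>(a, b). a + b) ` topspace (prod_topology ?T ?T) \<subseteq> S"
      using add topspace by auto
  next
    fix T
    assume "P T"
    have "continuous_map (prod_topology ?T ?T) (prod_topology T T) (\<lambda>(a, b). (id a, id b))"
      using coarser[OF \<open>P T\<close>] by (intro continuous_map_prod_top[THEN iffD2] disjI2) (simp add: id_def)
    moreover have "continuous_map (prod_topology T T) T (\<lambda>(a, b). a + b)"
      using group_top[OF \<open>P T\<close>] by (simp add: group_topology_def)
    ultimately have "continuous_map (prod_topology ?T ?T) T ((\<lambda>(a, b). a + b) \<circ> (\<lambda>(a, b). (id a, id b)))"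
      by (rule continuous_map_compose)
    moreover have "(\<lambda>(a, b). a + b) \<circ> (\<lambda>(a, b). (id a, id b)) = (\<lambda>(a, b). a + b)"
      by auto
    ultimately show "continuous_map (prod_topology ?T ?T) T (\<lambda>(a, b). a + b)"
      by simp
  qed
  moreover have "continuous_map ?T ?T uminus"
  proof (rule continuous_map_into_topology_generated_by_opens)
    show "uminus ` topspace ?T \<subseteq> S"
      using neg topspace by auto
  next
    fix T
    assume "P T"
    have "continuous_map T T uminus"
      using group_top[OF \<open>P T\<close>] by (simp add: group_topology_def)
    then show "continuous_map ?T T uminus"
      using continuous_map_compose[OF coarser[OF \<open>P T\<close>]] by simp
  qed
  ultimately show ?thesis
    using topspace by (simp add: group_topology_def)
qed

lemma closure_of_add_closed:
  fixes H :: "'a::ab_group_add set"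
  assumes T: "continuous_map (prod_topology T T) T (\<lambda>(a, b). a + b)"
    and add: "\<And>a b. a \<in> H \<Longrightarrow> b \<in> H \<Longrightarrow> a + b \<in> H"
    and a: "a \<in> T closure_of H" and b: "b \<in> T closure_of H"
  shows "a + b \<in> T closure_of H"
proof -
  have "(a, b) \<in> prod_topology T T closure_of (H \<times> H)"
    using a b by (simp add: closure_of_Times)
  then have "a + b \<in> T closure_of ((\<lambda>(a, b). a + b) ` (H \<times> H))"
    using continuous_map_image_closure_subset[OF T] by fastforce
  moreover have "(\<lambda>(a, b). a + b) ` (H \<times> H) \<subseteq> H"
    using add by auto
  ultimately show ?thesis
    using closure_of_mono by blast
qed

lemma closure_of_uminus_closed:
  fixes H :: "'a::ab_group_add set"
  assumes T: "continuous_map T T uminus"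
    and neg: "\<And>a. a \<in> H \<Longrightarrow> - a \<in> H"
    and a: "a \<in> T closure_of H"
  shows "- a \<in> T closure_of H"
proof -
  have "- a \<in> T closure_of (uminus ` H)"
    using continuous_map_image_closure_subset[OF T] a by blast
  moreover have "uminus ` H \<subseteq> H"
    using neg by auto
  ultimately show ?thesis
    using closure_of_mono by blast
qed

section \<open>The abelian group \<open>\<C>\<B>(V,G)\<close>\<close>

lemma Kc_Int:
  assumes "B \<in> Kc" "C \<in> Kc" "B \<union> C \<in> Kc"
  shows "B \<inter> C \<in> Kc"
proof -
  have B: "compact B" "convex B" "B \<noteq> {}" and C: "compact C" "convex C" "C \<noteq> {}"
    and "convex (B \<union> C)"
    using assms by (auto simp: Kc_def)
  \<comment> \<open>the convex union is connected, so its two closed pieces must meet\<close>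
  then have "B \<inter> C \<noteq> {}"
    using connected_closedD[of "B \<union> C" B C] convex_connected compact_imp_closed by blast
  then show ?thesis
    using B C by (simp add: Kc_def compact_Int convex_Int)
qed

lemma Kc_affine_image:
  assumes "X \<in> Kc" and "linear f"
  shows "(\<lambda>x. f x + b) ` X \<in> Kc"
proof -
  have "(\<lambda>x. f x + b) ` X = (+) b ` f ` X"
    by (auto simp: image_image add.commute)
  moreover have "compact (f ` X)" "convex (f ` X)"
    using assms by (auto simp: Kc_def compact_continuous_image linear_continuous_on
        linear_conv_bounded_linear convex_linear_image)
  ultimately show ?thesis
    using assms(1) by (simp add: Kc_def compact_translation convex_translation)
qed

lemma Kc_scaleR_image: "X \<in> Kc \<Longrightarrow> (\<lambda>v. c *\<^sub>R v) ` X \<in> Kc"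
  by (simp add: Kc_def compact_scaling convex_scaling)

lemma carrier_ZK [simp]: "carrier ZK = {p. Poly_Mapping.keys p \<subseteq> Kc}"
  and mult_ZK [simp]: "x \<otimes>\<^bsub>ZK\<^esub> y = x + y"
  and one_ZK [simp]: "\<one>\<^bsub>ZK\<^esub> = 0"
  by (simp_all add: ZK_def)

lemma ZK_add_closed: "a \<in> carrier ZK \<Longrightarrow> b \<in> carrier ZK \<Longrightarrow> a + b \<in> carrier ZK"
  using keys_add[of a b] by auto

lemma ZK_diff_closed: "a \<in> carrier ZK \<Longrightarrow> b \<in> carrier ZK \<Longrightarrow> a - b \<in> carrier ZK"
  using keys_diff[of a b] by auto

lemma ZK_uminus_closed: "a \<in> carrier ZK \<Longrightarrow> - a \<in> carrier ZK"
  by simp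

lemma gen_in_carrier_ZK: "X \<in> Kc \<Longrightarrow> gen X \<in> carrier ZK"
  by (simp add: gen_def)

lemma ZK_eq_free_Abelian_group: "ZK = free_Abelian_group Kc"
  by (simp add: ZK_def free_Abelian_group_def)

lemma comm_group_ZK: "comm_group ZK"
  unfolding ZK_eq_free_Abelian_group by (rule abelian_free_Abelian_group)

lemma inv_ZK: "p \<in> carrier ZK \<Longrightarrow> inv\<^bsub>ZK\<^esub> p = - p"
  unfolding ZK_eq_free_Abelian_group by simp

lemma group_topology_ZKtop: "group_topology (carrier ZK) ZKtop"
  unfolding ZKtop_def
  by (rule group_topology_generated_by_opens) (simp_all only: ZK_add_closed ZK_uminus_closed)

lemma topspace_ZKtop: "topspace ZKtop = carrier ZK"
  using group_topology_ZKtop unfolding group_topology_def by blast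

lemma CBrel_subset_carrier_ZK:
  assumes "affine_group G"
  shows "CBrel G \<subseteq> carrier ZK"
proof
  fix p
  assume "p \<in> CBrel G"
  then consider B C where "B \<in> Kc" "C \<in> Kc" "B \<union> C \<in> Kc"
      "p = gen (B \<union> C) - gen B - gen C + gen (B \<inter> C)"
    | X g where "X \<in> Kc" "g \<in> G" "p = gen X - gen (g ` X)"
    unfolding CBrel_def by blast
  then show "p \<in> carrier ZK"
  proof cases
    case 1
    then show ?thesis
      using Kc_Int[of B C]
      by (simp only: ZK_add_closed ZK_diff_closed gen_in_carrier_ZK)
  next
    case 2
    obtain f b where "linear f" "g = (\<lambda>x. f x + b)"
      using assms \<open>g \<in> G\<close> unfolding affine_group_def by blast
    then have "g ` X \<in> Kc"
      using Kc_affine_image \<open>X \<in> Kc\<close> by blast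
    then show ?thesis
      using 2 by (simp only: ZK_diff_closed gen_in_carrier_ZK)
  qed
qed

lemma CBker_subgroup:
  assumes "affine_group G"
  shows "subgroup (CBker G) ZK"
proof -
  interpret comm_group ZK
    by (rule comm_group_ZK)
  let ?S = "generate ZK (CBrel G)"
  have S: "subgroup ?S ZK"
    by (rule generate_is_subgroup[OF CBrel_subset_carrier_ZK[OF assms]])
  have kernel: "CBker G = ZKtop closure_of ?S"
    by (simp add: CBker_def)
  have cont: "continuous_map (prod_topology ZKtop ZKtop) ZKtop (\<lambda>(a, b). a + b)"
    "continuous_map ZKtop ZKtop uminus"
    using group_topology_ZKtop unfolding group_topology_def by blast+
  have subset: "CBker G \<subseteq> carrier ZK"
    unfolding kernel using closure_of_subset_topspace topspace_ZKtop by metis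
  show ?thesis
  proof (rule subgroupI[OF subset])
    have "?S \<subseteq> ZKtop closure_of ?S"
      using subgroup.subset[OF S] by (intro closure_of_subset) (simp add: topspace_ZKtop)
    then show "CBker G \<noteq> {}"
      unfolding kernel using subgroup.one_closed[OF S] by auto
  next
    fix a
    assume a: "a \<in> CBker G"
    have "- a \<in> CBker G"
      unfolding kernel
    proof (rule closure_of_uminus_closed[OF cont(2)])
      show "- b \<in> ?S" if "b \<in> ?S" for b
        using subgroup.m_inv_closed[OF S that]
        unfolding inv_ZK[OF subgroup.mem_carrier[OF S that]] .
    qed (use a kernel in simp)
    moreover have "a \<in> carrier ZK"
      using a subset by blast
    ultimately show "inv\<^bsub>ZK\<^esub> a \<in> CBker G"
      by (simp add: inv_ZK)
  next
    fix a b
    assume "a \<in> CBker G" "b \<in> CBker G"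
    moreover have "\<And>x y. x \<in> ?S \<Longrightarrow> y \<in> ?S \<Longrightarrow> x + y \<in> ?S"
      using subgroup.m_closed[OF S] by simp
    ultimately show "a \<otimes>\<^bsub>ZK\<^esub> b \<in> CBker G"
      unfolding kernel mult_ZK by (rule closure_of_add_closed[OF cont(1), rotated 1])
  qed
qed

lemma CBker_normal: "affine_group G \<Longrightarrow> CBker G \<lhd> ZK"
  by (rule comm_group.subgroup_imp_normal[OF comm_group_ZK CBker_subgroup])

lemma comm_group_CB: "affine_group G \<Longrightarrow> comm_group (CB G)"
  unfolding CB_def by (rule comm_group.abelian_FactGroup[OF comm_group_ZK CBker_subgroup])

lemma carrier_CB: "carrier (CB G) = (\<lambda>p. CBker G #>\<^bsub>ZK\<^esub> p) ` carrier ZK"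
  unfolding CB_def by (rule carrier_FactGroup)

lemma topspace_CBtop: "topspace (CBtop G) = carrier (CB G)"
proof -
  define open_CB where
    "open_CB U \<longleftrightarrow> U \<subseteq> carrier (CB G) \<and> openin ZKtop {p \<in> carrier ZK. CBker G #>\<^bsub>ZK\<^esub> p \<in> U}"
    for U
  have "istopology open_CB"
    unfolding istopology_def
  proof (intro conjI allI impI)
    fix S T
    assume "open_CB S" "open_CB T"
    moreover have "{p \<in> carrier ZK. CBker G #>\<^bsub>ZK\<^esub> p \<in> S \<inter> T}
        = {p \<in> carrier ZK. CBker G #>\<^bsub>ZK\<^esub> p \<in> S} \<inter> {p \<in> carrier ZK. CBker G #>\<^bsub>ZK\<^esub> p \<in> T}"
      by blast
    ultimately show "open_CB (S \<inter> T)"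
      by (auto simp: open_CB_def)
  next
    fix \<K>
    assume "\<forall>K\<in>\<K>. open_CB K"
    moreover have "{p \<in> carrier ZK. CBker G #>\<^bsub>ZK\<^esub> p \<in> \<Union>\<K>}
        = (\<Union>K\<in>\<K>. {p \<in> carrier ZK. CBker G #>\<^bsub>ZK\<^esub> p \<in> K})"
      by blast
    ultimately show "open_CB (\<Union>\<K>)"
      by (auto simp: open_CB_def intro!: openin_Union)
  qed
  then have openin_CBtop: "openin (CBtop G) = open_CB"
    unfolding CBtop_def open_CB_def by simp
  have "{p \<in> carrier ZK. CBker G #>\<^bsub>ZK\<^esub> p \<in> carrier (CB G)} = topspace ZKtop"
    using carrier_CB topspace_ZKtop by blast
  then have "open_CB (carrier (CB G))"
    by (simp add: open_CB_def)
  then show ?thesis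
    unfolding topspace_def openin_CBtop open_CB_def by blast
qed

lemma hom_ZK_eqI:
  assumes "group H" "f \<in> hom ZK H" "g \<in> hom ZK H"
    and gen: "\<And>X. X \<in> Kc \<Longrightarrow> f (gen X) = g (gen X)"
    and p: "p \<in> carrier ZK"
  shows "f p = g p"
proof -
  interpret ZK: comm_group ZK
    by (rule comm_group_ZK)
  interpret f: group_hom ZK H f
    using assms ZK.is_group by (simp add: group_hom_def group_hom_axioms_def)
  interpret g: group_hom ZK H g
    using assms ZK.is_group by (simp add: group_hom_def group_hom_axioms_def)
  show ?thesis
  proof (rule free_Abelian_group_induct[where P = "\<lambda>p. f p = g p"])
    show "Poly_Mapping.keys p \<subseteq> Kc"
      using p by simp
    show "f 0 = g 0"
      using f.hom_one g.hom_one by simp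
    show "f (frag_of X) = g (frag_of X)" if "X \<in> Kc" for X
      using gen[OF that] by (simp add: gen_def)
    show "f (a - b) = g (a - b)"
      if "Poly_Mapping.keys a \<subseteq> Kc" "Poly_Mapping.keys b \<subseteq> Kc" "f a = g a" "f b = g b" for a b
    proof -
      have ab: "a \<in> carrier ZK" "b \<in> carrier ZK"
        using that by simp_all
      have "f (a - b) = f a \<otimes>\<^bsub>H\<^esub> inv\<^bsub>H\<^esub> f b" "g (a - b) = g a \<otimes>\<^bsub>H\<^esub> inv\<^bsub>H\<^esub> g b"
        using f.hom_mult[of a "inv\<^bsub>ZK\<^esub> b"] g.hom_mult[of a "inv\<^bsub>ZK\<^esub> b"] f.hom_inv g.hom_inv ab
        by (simp_all add: inv_ZK)
      then show ?thesis
        using that by simp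
    qed
  qed
qed

section \<open>The dilation action on \<open>\<C>\<B>(V,G)\<close>\<close>

lemma dilation_mult:
  fixes G :: "('v::euclidean_space \<Rightarrow> 'v) set"
  assumes aff: "affine_group G" and dil: "is_dilation G D"
    and l: "l \<ge> 0" and m: "m \<ge> 0" and x: "x \<in> carrier (CB G)"
  shows "D m (D l x) = D (m * l) x"
proof -
  interpret normal "CBker G" ZK
    by (rule CBker_normal[OF aff])
  let ?q = "\<lambda>p. CBker G #>\<^bsub>ZK\<^esub> p"
  have q: "?q \<in> hom ZK (CB G)"
    using r_coset_hom_Mod unfolding CB_def .
  have D_hom: "D t \<in> hom (CB G) (CB G)" if "t \<ge> 0" for t
    using dil that by (simp add: is_dilation_def)
  have D_cls: "D t (cls G X) = cls G ((\<lambda>v. t *\<^sub>R v) ` X)" if "t \<ge> 0" "X \<in> Kc" for t X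
    using dil that by (simp add: is_dilation_def)
  obtain p where p: "p \<in> carrier ZK" "x = ?q p"
    using x carrier_CB by blast
  have "(D m \<circ> D l \<circ> ?q) p = (D (m * l) \<circ> ?q) p"
  proof (rule hom_ZK_eqI[OF _ _ _ _ p(1)])
    show "group (CB G)"
      using comm_group_CB[OF aff] by (simp add: comm_group_def)
    show "D m \<circ> D l \<circ> ?q \<in> hom ZK (CB G)"
      using Group.hom_compose[OF q Group.hom_compose[OF D_hom[OF l] D_hom[OF m]]] .
    show "D (m * l) \<circ> ?q \<in> hom ZK (CB G)"
      using Group.hom_compose[OF q D_hom] l m by simp
    show "(D m \<circ> D l \<circ> ?q) (gen X) = (D (m * l) \<circ> ?q) (gen X)" if X: "X \<in> Kc" for X
      using D_cls[OF l X] D_cls[OF m Kc_scaleR_image[OF X]] D_cls[of "m * l" X] l m X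
      by (simp add: cls_def image_image)
  qed
  then show ?thesis
    using p(2) by simp
qed

lemma polynomial_dilation_CB:
  fixes G :: "('v::euclidean_space \<Rightarrow> 'v) set"
  assumes aff: "affine_group G" and dil: "is_dilation G D"
    and components: "dilation_components G D rho0 rho"
  shows "polynomial_dilation (CB G) DIM('v) D rho0 rho"
proof (intro polynomial_dilation.intro polynomial_dilation_axioms.intro)
  have rho0: "continuous_map (CBtop G) (CBtop G) rho0"
    and rho: "\<And>i. i \<in> {1..DIM('v)} \<Longrightarrow>
      continuous_map (prod_topology (top_of_set {0..}) (CBtop G)) (CBtop G) (\<lambda>(l, x). rho i l x)"
    and rho_add: "\<And>i s t x. i \<in> {1..DIM('v)} \<Longrightarrow> s \<ge> 0 \<Longrightarrow> t \<ge> 0 \<Longrightarrow> x \<in> carrier (CB G) \<Longrightarrow>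
      rho i (s + t) x = rho i s x \<otimes>\<^bsub>CB G\<^esub> rho i t x"
    and decomp: "\<And>l x. l \<ge> 0 \<Longrightarrow> x \<in> carrier (CB G) \<Longrightarrow>
      D l x = rho0 x \<otimes>\<^bsub>CB G\<^esub> (\<Otimes>\<^bsub>CB G\<^esub>i\<in>{1..DIM('v)}. rho i (l ^ i) x)"
    using components unfolding dilation_components_def by blast+
  show "comm_group (CB G)"
    by (rule comm_group_CB[OF aff])
  show "rho0 x \<in> carrier (CB G)" if "x \<in> carrier (CB G)" for x
    using continuous_map_image_subset_topspace[OF rho0] that by (auto simp: topspace_CBtop)
  show "halfline_hom (CB G) (\<lambda>t. rho i t x)" if i: "i \<in> {1..DIM('v)}" and x: "x \<in> carrier (CB G)" for i x
    unfolding halfline_hom_def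
  proof (intro conjI allI impI)
    fix t :: real
    assume "t \<ge> 0"
    then have "(t, x) \<in> topspace (prod_topology (top_of_set {0..}) (CBtop G))"
      using x by (simp add: topspace_CBtop)
    then show "rho i t x \<in> carrier (CB G)"
      using continuous_map_image_subset_topspace[OF rho[OF i]] by (force simp: topspace_CBtop)
  qed (use rho_add i x in blast)
  show "D l \<in> hom (CB G) (CB G)" if "l \<ge> 0" for l
    using dil that by (simp add: is_dilation_def)
  show "D m (D l x) = D (m * l) x" if "l \<ge> 0" "m \<ge> 0" "x \<in> carrier (CB G)" for l m x
    using dilation_mult[OF aff dil that] .
  show "D l x = rho0 x \<otimes>\<^bsub>CB G\<^esub> (\<Otimes>\<^bsub>CB G\<^esub>i\<in>{1..DIM('v)}. rho i (l ^ i) x)"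
    if "l \<ge> 0" "x \<in> carrier (CB G)" for l x
    using decomp[OF that] .
qed

theorem lemma6p8:
  fixes G :: "('v::euclidean_space \<Rightarrow> 'v) set"
    and D :: "real \<Rightarrow> ('v set \<Rightarrow>\<^sub>0 int) set \<Rightarrow> ('v set \<Rightarrow>\<^sub>0 int) set"
    and rho0 :: "('v set \<Rightarrow>\<^sub>0 int) set \<Rightarrow> ('v set \<Rightarrow>\<^sub>0 int) set"
    and rho :: "nat \<Rightarrow> real \<Rightarrow> ('v set \<Rightarrow>\<^sub>0 int) set \<Rightarrow> ('v set \<Rightarrow>\<^sub>0 int) set"
  assumes "affine_group G"
    and "is_dilation G D"
    and "dilation_components G D rho0 rho"
  shows "\<forall>i\<in>{0..DIM('v)}. \<forall>j\<in>{0..DIM('v)}. \<forall>l::real. l \<ge> 0 \<longrightarrow> (\<forall>x\<in>carrier (CB G).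
           idem rho0 rho i (rhoE rho0 rho j l x) = rhoE rho0 rho i l (idem rho0 rho j x)
         \<and> rhoE rho0 rho i l (idem rho0 rho j x) =
             (if i = j then rhoE rho0 rho i l x else \<one>\<^bsub>CB G\<^esub>)
         \<and> rhoE rho0 rho i l x \<in> idem rho0 rho i ` carrier (CB G))"
proof -
  interpret polynomial_dilation "CB G" "DIM('v)" D rho0 rho
    by (rule polynomial_dilation_CB[OF assms])
  show ?thesis
  proof (intro ballI allI impI conjI)
    fix i j l x
    assume i: "i \<in> {0..DIM('v)}" and j: "j \<in> {0..DIM('v)}" and l: "(l::real) \<ge> 0"
      and x: "x \<in> carrier (CB G)"
    show "idem rho0 rho i (rhoE rho0 rho j l x) = rhoE rho0 rho i l (idem rho0 rho j x)"
      using rhoE_rhoE[OF i j l _ x, of 1] rhoE_rhoE[OF i j _ l x, of 1] by (simp add: idem_def)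
    show "rhoE rho0 rho i l (idem rho0 rho j x) = (if i = j then rhoE rho0 rho i l x else \<one>\<^bsub>CB G\<^esub>)"
      using rhoE_rhoE[OF i j _ l x, of 1] by (simp add: idem_def)
    show "rhoE rho0 rho i l x \<in> idem rho0 rho i ` carrier (CB G)"
      by (rule rhoE_in_idem_image[OF i l x])
  qed
qed

end
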